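(* Let $Z_1,\dots,Z_n$ be i.i.d. real random variables with $\mathbb{E}Z_1=\mu_Z$, $\mathrm{Var}(Z_1)=\sigma_Z^2>0$ and $|Z_1-\mu_Z|\leq\Delta_Z$ almost surely. Let $\overline{Z}_n:=\frac1n\sum_{i=1}^nZ_i$, \[V_n^2:=\frac1n\sum_{i=1}^n(Z_i-\mu_Z)^2,\qquad\Sigma_n^2:=\frac1n\sum_{i=1}^n(Z_i-\overline{Z}_n)^2,\] with $V_n,\Sigma_n\geq0$. Then for all $z>0$, \[\Pr\left(|V_n-\sigma_Z|>\frac{z\Delta_Z}{\sqrt n}+\frac{z^2\Delta_Z^2}{12n\sigma_Z}\right)\leq2\exp\left(-\frac{z^2}2\right)\] and \[\Pr\left(|\Sigma_n-\sigma_Z|>\frac{2z\Delta_Z}{\sqrt n}+\frac{2z^2\Delta_Z^2}{12n\sigma_Z}\right)\leq4\exp\left(-\frac{z^2}2\right).\] *)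

theory Defs
  imports "HOL-Probability.Probability"
begin

definition sample_mean :: "(nat \<Rightarrow> 'a \<Rightarrow> real) \<Rightarrow> nat \<Rightarrow> 'a \<Rightarrow> real" where
  "sample_mean Z n x = (1 / real n) * (\<Sum>i=1..n. Z i x)"

definition V_stat :: "(nat \<Rightarrow> 'a \<Rightarrow> real) \<Rightarrow> real \<Rightarrow> nat \<Rightarrow> 'a \<Rightarrow> real" where
  "V_stat Z mu n x = sqrt ((1 / real n) * (\<Sum>i=1..n. (Z i x - mu)\<^sup>2))"

definition Sigma_stat :: "(nat \<Rightarrow> 'a \<Rightarrow> real) \<Rightarrow> nat \<Rightarrow> 'a \<Rightarrow> real" where
  "Sigma_stat Z n x = sqrt ((1 / real n) * (\<Sum>i=1..n. (Z i x - sample_mean Z n x)\<^sup>2))"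

end

theory Submission
  imports Defs
begin

(* V_n^2 is the empirical mean of the i.i.d. variables W_i = (Z_i - mu)^2, which take values
   in [0, Delta^2] and have mean sigma^2. Chernoff bounds for sum W_i, with the moment generating
   function estimated through convexity of exp (upper tail, Bennett) and through
   exp (-x) <= 1 - x + x^2/2 (lower tail), show that V_n >= sigma + u and V_n <= sigma - u each have
   probability at most exp (-n u^2 / (2 Delta^2)), which is exp (-z^2/2) for u = z Delta / sqrt n.
   Since Sigma_n^2 = V_n^2 - (mean_n - mu)^2, we get |Sigma_n - sigma| <= |V_n - sigma| + |mean_n - mu|,
   and Hoeffding's inequality bounds the last term. *)

lemma exp_neg_le_quadratic:
  fixes x :: real
  assumes "0 \<le> x"
  shows "exp (- x) \<le> 1 - x + x\<^sup>2 / 2"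
proof -
  define g where "g = (\<lambda>t::real. 1 - t + t\<^sup>2 / 2 - exp (- t))"
  have g': "(g has_real_derivative (t - 1 + exp (- t))) (at t)" for t
    unfolding g_def by (auto intro!: derivative_eq_intros simp: power2_eq_square)
  have "g 0 \<le> g x"
  proof (rule DERIV_nonneg_imp_nondecreasing[OF assms])
    fix t :: real
    have "0 \<le> t - 1 + exp (- t)"
      using exp_ge_add_one_self[of "- t"] by linarith
    then show "\<exists>y. (g has_real_derivative y) (at t) \<and> 0 \<le> y"
      using g' by blast
  qed
  then show ?thesis
    by (simp add: g_def)
qed

lemma exp_mult_le_chord:
  fixes s w B :: real
  assumes "0 \<le> w" "w \<le> B" "0 < B" "0 \<le> s"
  shows "exp (s * w) \<le> 1 + (exp (s * B) - 1) / B * w"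
proof -
  have "exp (s * ((1 - w / B) *\<^sub>R 0 + (w / B) *\<^sub>R B))
          \<le> (1 - w / B) * exp (s * 0) + (w / B) * exp (s * B)"
    by (rule convex_onD[OF convex_on_exp[OF assms(4)]]) (use assms in auto)
  then show ?thesis
    using assms by (simp add: algebra_simps diff_divide_distrib)
qed

lemma exp_neg_mult_le_affine:
  fixes s w B :: real
  assumes "0 \<le> w" "w \<le> B" "0 \<le> s"
  shows "exp (- s * w) \<le> 1 + (s\<^sup>2 * B / 2 - s) * w"
proof -
  have "exp (- s * w) \<le> 1 - s * w + (s * w)\<^sup>2 / 2"
    using exp_neg_le_quadratic[of "s * w"] assms by simp
  moreover have "(s * w)\<^sup>2 \<le> s\<^sup>2 * B * w"
    using mult_left_mono[OF assms(2), of "s\<^sup>2 * w"] assms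
    by (simp add: power2_eq_square mult_ac)
  ultimately show ?thesis
    by (simp add: algebra_simps)
qed

lemma abs_diff_le_of_power2_eq_add:
  fixes v w c s :: real
  assumes "0 \<le> v" "0 \<le> w" "v\<^sup>2 = w\<^sup>2 + c\<^sup>2"
  shows "\<bar>w - s\<bar> \<le> \<bar>v - s\<bar> + \<bar>c\<bar>"
proof -
  have "w \<le> v"
  proof (rule power2_le_imp_le)
    show "w\<^sup>2 \<le> v\<^sup>2"
      using assms(3) by simp
  qed fact
  moreover have "v \<le> w + \<bar>c\<bar>"
  proof (rule power2_le_imp_le)
    show "v\<^sup>2 \<le> (w + \<bar>c\<bar>)\<^sup>2"
      unfolding assms(3) power2_sum using assms(2) by simp
  qed (use assms in simp)
  ultimately show ?thesis
    by linarith
qed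

lemma sqrt_deviation_gt_cases:
  fixes y \<sigma> u :: real
  assumes "0 \<le> y" "0 \<le> \<sigma>" "0 \<le> u" "u < \<bar>sqrt y - \<sigma>\<bar>"
  shows "(\<sigma> + u)\<^sup>2 \<le> y \<or> y \<le> \<sigma> * (\<sigma> - u)"
proof (cases "\<sigma> + u < sqrt y")
  case True
  then have "(\<sigma> + u)\<^sup>2 \<le> (sqrt y)\<^sup>2"
    using assms by (intro power_mono) auto
  then show ?thesis
    using assms by simp
next
  case False
  then have "u * \<sigma> \<le> (\<sigma> - sqrt y) * (\<sigma> + sqrt y)"
    using assms by (intro mult_mono) auto
  then have "y \<le> \<sigma> * (\<sigma> - u)"
    using assms by (simp add: algebra_simps)
  then show ?thesis ..
qed

lemma sum_power2_diff_mean: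
  fixes x :: "'b \<Rightarrow> real"
  assumes "finite A" "A \<noteq> {}"
  shows "(\<Sum>i\<in>A. (x i - (\<Sum>j\<in>A. x j) / card A)\<^sup>2)
       = (\<Sum>i\<in>A. (x i - m)\<^sup>2) - card A * ((\<Sum>j\<in>A. x j) / card A - m)\<^sup>2"
proof -
  define c where "c = (\<Sum>j\<in>A. x j) / card A - m"
  have sum_dev: "(\<Sum>i\<in>A. x i - m) = card A * c"
    using assms by (simp add: c_def sum_subtractf algebra_simps)
  have "(\<Sum>i\<in>A. (x i - (\<Sum>j\<in>A. x j) / card A)\<^sup>2) = (\<Sum>i\<in>A. ((x i - m) - c)\<^sup>2)"
    by (simp add: c_def)
  also have "\<dots> = (\<Sum>i\<in>A. (x i - m)\<^sup>2 - 2 * c * (x i - m) + c\<^sup>2)"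
    by (intro sum.cong refl) (simp add: power2_diff)
  also have "\<dots> = (\<Sum>i\<in>A. (x i - m)\<^sup>2) - 2 * c * (\<Sum>i\<in>A. x i - m) + card A * c\<^sup>2"
    by (simp only: sum.distrib sum_subtractf sum_distrib_left[symmetric] sum_constant)
  also have "\<dots> = (\<Sum>i\<in>A. (x i - m)\<^sup>2) - card A * c\<^sup>2"
    by (simp add: sum_dev power2_eq_square)
  finally show ?thesis
    by (simp add: c_def)
qed

context prob_space
begin

lemma nn_integral_exp_le_of_affine_bound:
  assumes W: "integrable M W"
    and affine: "AE x in M. exp (c * W x) \<le> 1 + \<beta> * W x"
  shows "(\<integral>\<^sup>+x. exp (c * W x) \<partial>M) \<le> exp (\<beta> * expectation W)"
proof -
  have "(\<integral>\<^sup>+x. exp (c * W x) \<partial>M) \<le> (\<integral>\<^sup>+x. ennreal (1 + \<beta> * W x) \<partial>M)"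
    by (intro nn_integral_mono_AE) (use affine in \<open>auto elim!: eventually_mono intro: ennreal_leI\<close>)
  also have "\<dots> = ennreal (expectation (\<lambda>x. 1 + \<beta> * W x))"
  proof (rule nn_integral_eq_integral)
    show "AE x in M. 0 \<le> 1 + \<beta> * W x"
      using affine by eventually_elim (metis exp_ge_zero order_trans)
  qed (use W in auto)
  also have "expectation (\<lambda>x. 1 + \<beta> * W x) = 1 + \<beta> * expectation W"
    using W by (simp add: prob_space)
  also have "ennreal (1 + \<beta> * expectation W) \<le> exp (\<beta> * expectation W)"
    by (intro ennreal_leI) (metis add.commute exp_ge_add_one_self)
  finally show ?thesis .
qed

lemma nn_integral_exp_le_Bennett:
  assumes "random_variable borel W" "AE x in M. W x \<in> {0..B}" "0 < B" "0 \<le> s"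
  shows "(\<integral>\<^sup>+x. exp (s * W x) \<partial>M) \<le> exp ((exp (s * B) - 1) / B * expectation W)"
proof (rule nn_integral_exp_le_of_affine_bound)
  interpret interval_bounded_random_variable M W 0 B
    by unfold_locales fact+
  show "integrable M W" ..
  show "AE x in M. exp (s * W x) \<le> 1 + (exp (s * B) - 1) / B * W x"
    using assms(2) by eventually_elim (use assms exp_mult_le_chord in auto)
qed

lemma nn_integral_exp_neg_le_quadratic:
  assumes "random_variable borel W" "AE x in M. W x \<in> {0..B}" "0 \<le> s"
  shows "(\<integral>\<^sup>+x. exp (- s * W x) \<partial>M) \<le> exp ((s\<^sup>2 * B / 2 - s) * expectation W)"
proof (rule nn_integral_exp_le_of_affine_bound)
  interpret interval_bounded_random_variable M W 0 B
    by unfold_locales fact+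
  show "integrable M W" ..
  show "AE x in M. exp (- s * W x) \<le> 1 + (s\<^sup>2 * B / 2 - s) * W x"
    using assms(2) by eventually_elim (use assms exp_neg_mult_le_affine in auto)
qed

lemma Chernoff_ineq_indep_sum_ge:
  fixes W :: "'i \<Rightarrow> 'a \<Rightarrow> real" and s k a :: real
  assumes fin: "finite I" and ind: "indep_vars (\<lambda>_. borel) W I" and s: "0 < s"
    and mgf: "\<And>i. i \<in> I \<Longrightarrow> (\<integral>\<^sup>+x. exp (s * W i x) \<partial>M) \<le> exp k"
  shows "prob {x \<in> space M. a \<le> (\<Sum>i\<in>I. W i x)} \<le> exp (card I * k - s * a)"
proof -
  have "\<And>i. i \<in> I \<Longrightarrow> random_variable borel (W i)"
    using ind by (simp add: indep_vars_def)
  then have sum_meas: "(\<lambda>x. \<Sum>i\<in>I. W i x) \<in> borel_measurable M"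
    by (rule borel_measurable_sum)
  have "ennreal (prob {x \<in> space M. a \<le> (\<Sum>i\<in>I. W i x)})
      = emeasure M {x \<in> space M. a \<le> (\<Sum>i\<in>I. W i x)}"
    by (simp add: emeasure_eq_measure)
  also have "\<dots> \<le> ennreal (exp (- s * a)) * (\<integral>\<^sup>+x\<in>space M. exp (s * (\<Sum>i\<in>I. W i x)) \<partial>M)"
    by (intro Chernoff_ineq_nn_integral_ge s) (use sum_meas in auto)
  also have "(\<integral>\<^sup>+x\<in>space M. exp (s * (\<Sum>i\<in>I. W i x)) \<partial>M)
      = (\<integral>\<^sup>+x. (\<Prod>i\<in>I. ennreal (exp (s * W i x))) \<partial>M)"
    by (intro nn_integral_cong) (simp add: sum_distrib_left exp_sum fin prod_ennreal)
  also have "\<dots> = (\<Prod>i\<in>I. \<integral>\<^sup>+x. exp (s * W i x) \<partial>M)"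
    by (intro indep_vars_nn_integral fin indep_vars_compose2[OF ind]) auto
  also have "ennreal (exp (- s * a)) * \<dots> \<le> ennreal (exp (- s * a)) * (\<Prod>i\<in>I. ennreal (exp k))"
    by (intro mult_left_mono prod_mono_ennreal mgf) auto
  also have "\<dots> = ennreal (exp (- s * a) * exp k ^ card I)"
    by (simp add: ennreal_mult ennreal_power)
  also have "exp (- s * a) * exp k ^ card I = exp (card I * k - s * a)"
    by (simp add: exp_of_nat_mult[symmetric] exp_add[symmetric] algebra_simps)
  finally show ?thesis
    by (simp add: ennreal_le_iff)
qed

lemma Chernoff_ineq_indep_sum_le:
  fixes W :: "'i \<Rightarrow> 'a \<Rightarrow> real" and s k a :: real
  assumes fin: "finite I" and ind: "indep_vars (\<lambda>_. borel) W I" and s: "0 < s"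
    and mgf: "\<And>i. i \<in> I \<Longrightarrow> (\<integral>\<^sup>+x. exp (- s * W i x) \<partial>M) \<le> exp k"
  shows "prob {x \<in> space M. (\<Sum>i\<in>I. W i x) \<le> a} \<le> exp (card I * k + s * a)"
proof -
  have "indep_vars (\<lambda>_. borel) (\<lambda>i x. - W i x) I"
    by (rule indep_vars_compose2[OF ind]) auto
  from Chernoff_ineq_indep_sum_ge[OF fin this s, of k "- a"] mgf show ?thesis
    by (simp add: sum_negf)
qed

lemma upper_tail_sum_bounded_nonneg:
  fixes W :: "'i \<Rightarrow> 'a \<Rightarrow> real" and B \<sigma> u :: real
  assumes fin: "finite I" and ind: "indep_vars (\<lambda>_. borel) W I"
    and range: "\<And>i. i \<in> I \<Longrightarrow> AE x in M. W i x \<in> {0..B}"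
    and mean: "\<And>i. i \<in> I \<Longrightarrow> expectation (W i) = \<sigma>\<^sup>2"
    and B: "0 < B" and \<sigma>: "0 < \<sigma>" and u: "0 < u"
  shows "prob {x \<in> space M. card I * (\<sigma> + u)\<^sup>2 \<le> (\<Sum>i\<in>I. W i x)} \<le> exp (- real (card I) * u\<^sup>2 / B)"
proof -
  \<comment> \<open>With this s, exp (s B) = (1 + u/\<sigma>)^2, and ln (1 + t) \<ge> t / (1 + t) bounds the exponent.\<close>
  define l where "l = ln (1 + u / \<sigma>)"
  define s where "s = 2 * l / B"
  have "0 < l"
    unfolding l_def using u \<sigma> by (intro ln_gt_zero) simp
  then have s: "0 < s"
    using B by (simp add: s_def)
  have exp_sB: "exp (s * B) = (1 + u / \<sigma>)\<^sup>2"
    using B u \<sigma> by (simp add: s_def l_def exp_double add_pos_pos)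
  have mgf: "(\<integral>\<^sup>+x. exp (s * W i x) \<partial>M) \<le> exp ((2 * \<sigma> * u + u\<^sup>2) / B)" if i: "i \<in> I" for i
  proof -
    have "random_variable borel (W i)"
      using ind i by (simp add: indep_vars_def)
    moreover have "(exp (s * B) - 1) / B * expectation (W i) = (2 * \<sigma> * u + u\<^sup>2) / B"
      unfolding exp_sB mean[OF i] using \<sigma> B by (simp add: field_simps power2_eq_square)
    ultimately show ?thesis
      using nn_integral_exp_le_Bennett[OF _ range[OF i] B s[THEN less_imp_le]] by metis
  qed
  have "prob {x \<in> space M. card I * (\<sigma> + u)\<^sup>2 \<le> (\<Sum>i\<in>I. W i x)}
      \<le> exp (card I * ((2 * \<sigma> * u + u\<^sup>2) / B) - s * (card I * (\<sigma> + u)\<^sup>2))"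
    by (rule Chernoff_ineq_indep_sum_ge[OF fin ind s mgf])
  also have "\<dots> \<le> exp (- real (card I) * u\<^sup>2 / B)"
  proof -
    have "u \<le> l * (\<sigma> + u)"
      using ln_add1_ge[of "u / \<sigma>"] u \<sigma> by (simp add: l_def add.commute field_simps)
    then have "u * (2 * (\<sigma> + u)) \<le> l * (\<sigma> + u) * (2 * (\<sigma> + u))"
      by (rule mult_right_mono) (use u \<sigma> in simp)
    then have key: "2 * u * (\<sigma> + u) \<le> 2 * l * (\<sigma> + u)\<^sup>2"
      by (simp add: power2_eq_square mult_ac)
    have "card I * ((2 * \<sigma> * u + u\<^sup>2) / B) - s * (card I * (\<sigma> + u)\<^sup>2)
        = card I / B * (2 * \<sigma> * u + u\<^sup>2 - 2 * l * (\<sigma> + u)\<^sup>2)"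
      using B by (simp add: s_def field_simps)
    also have "\<dots> \<le> card I / B * (2 * \<sigma> * u + u\<^sup>2 - 2 * u * (\<sigma> + u))"
      by (rule mult_left_mono) (use key B in auto)
    also have "\<dots> = - real (card I) * u\<^sup>2 / B"
      by (simp add: field_simps power2_eq_square)
    finally show ?thesis
      by simp
  qed
  finally show ?thesis .
qed

lemma lower_tail_sum_bounded_nonneg:
  fixes W :: "'i \<Rightarrow> 'a \<Rightarrow> real" and B \<sigma> u :: real
  assumes fin: "finite I" and ind: "indep_vars (\<lambda>_. borel) W I"
    and range: "\<And>i. i \<in> I \<Longrightarrow> AE x in M. W i x \<in> {0..B}"
    and mean: "\<And>i. i \<in> I \<Longrightarrow> expectation (W i) = \<sigma>\<^sup>2"
    and B: "0 < B" and \<sigma>: "0 < \<sigma>" and u: "0 < u"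
  shows "prob {x \<in> space M. (\<Sum>i\<in>I. W i x) \<le> card I * \<sigma> * (\<sigma> - u)}
           \<le> exp (- real (card I) * u\<^sup>2 / (2 * B))"
proof -
  define s where "s = u / (B * \<sigma>)"
  have s: "0 < s"
    using B \<sigma> u by (simp add: s_def)
  have mgf: "(\<integral>\<^sup>+x. exp (- s * W i x) \<partial>M) \<le> exp ((s\<^sup>2 * B / 2 - s) * \<sigma>\<^sup>2)" if i: "i \<in> I" for i
  proof -
    have "random_variable borel (W i)"
      using ind i by (simp add: indep_vars_def)
    from nn_integral_exp_neg_le_quadratic[OF this range[OF i] s[THEN less_imp_le]]
    show ?thesis
      by (simp add: mean[OF i])
  qed
  have "prob {x \<in> space M. (\<Sum>i\<in>I. W i x) \<le> card I * \<sigma> * (\<sigma> - u)}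
      \<le> exp (card I * ((s\<^sup>2 * B / 2 - s) * \<sigma>\<^sup>2) + s * (card I * \<sigma> * (\<sigma> - u)))"
    by (rule Chernoff_ineq_indep_sum_le[OF fin ind s mgf])
  also have "card I * ((s\<^sup>2 * B / 2 - s) * \<sigma>\<^sup>2) + s * (card I * \<sigma> * (\<sigma> - u))
      = - real (card I) * u\<^sup>2 / (2 * B)"
    using B \<sigma> by (simp add: s_def field_simps power2_eq_square)
  finally show ?thesis .
qed

lemma prob_sqrt_mean_deviation_gt:
  fixes W :: "'i \<Rightarrow> 'a \<Rightarrow> real" and B \<sigma> u :: real
  assumes fin: "finite I" and nonempty: "I \<noteq> {}" and ind: "indep_vars (\<lambda>_. borel) W I"
    and range: "\<And>i. i \<in> I \<Longrightarrow> AE x in M. W i x \<in> {0..B}"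
    and "\<And>i. i \<in> I \<Longrightarrow> expectation (W i) = \<sigma>\<^sup>2"
    and B: "0 < B" and \<sigma>: "0 < \<sigma>" and u: "0 < u"
  shows "prob {x \<in> space M. u < \<bar>sqrt ((\<Sum>i\<in>I. W i x) / card I) - \<sigma>\<bar>}
           \<le> 2 * exp (- real (card I) * u\<^sup>2 / (2 * B))"
proof -
  define U where "U = {x \<in> space M. card I * (\<sigma> + u)\<^sup>2 \<le> (\<Sum>i\<in>I. W i x)}"
  define L where "L = {x \<in> space M. (\<Sum>i\<in>I. W i x) \<le> card I * \<sigma> * (\<sigma> - u)}"
  have n: "0 < real (card I)"
    using fin nonempty by (simp add: card_gt_0_iff)
  have "\<And>i. i \<in> I \<Longrightarrow> random_variable borel (W i)"
    using ind by (simp add: indep_vars_def)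
  then have [measurable]: "(\<lambda>x. \<Sum>i\<in>I. W i x) \<in> borel_measurable M"
    by (rule borel_measurable_sum)
  have sets: "U \<in> sets M" "L \<in> sets M"
    unfolding U_def L_def by measurable
  \<comment> \<open>sqrt is odd, so the case split needs the sum to be nonnegative, which holds only AE.\<close>
  have "AE x in M. \<forall>i\<in>I. 0 \<le> W i x"
    using range by (intro AE_finite_allI[OF fin]) (auto elim: eventually_mono)
  then have "AE x in M. x \<in> {x \<in> space M. u < \<bar>sqrt ((\<Sum>i\<in>I. W i x) / card I) - \<sigma>\<bar>}
      \<longrightarrow> x \<in> U \<union> L"
  proof eventually_elim
    case (elim x)
    then have "0 \<le> (\<Sum>i\<in>I. W i x) / card I"
      by (simp add: sum_nonneg)
    with sqrt_deviation_gt_cases[OF this] \<sigma> u n show ?case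
      by (auto simp: U_def L_def pos_le_divide_eq pos_divide_le_eq mult_ac)
  qed
  then have "prob {x \<in> space M. u < \<bar>sqrt ((\<Sum>i\<in>I. W i x) / card I) - \<sigma>\<bar>} \<le> prob (U \<union> L)"
    by (rule finite_measure_mono_AE) (use sets in auto)
  also have "\<dots> \<le> prob U + prob L"
    by (rule measure_Un_le) (use sets in auto)
  also have "\<dots> \<le> exp (- real (card I) * u\<^sup>2 / B) + exp (- real (card I) * u\<^sup>2 / (2 * B))"
    unfolding U_def L_def
    by (intro add_mono upper_tail_sum_bounded_nonneg lower_tail_sum_bounded_nonneg) (use assms in auto)
  also have "\<dots> \<le> 2 * exp (- real (card I) * u\<^sup>2 / (2 * B))"
    using B by (simp add: field_simps)
  finally show ?thesis .
qed

end

lemma Sigma_stat_deviation_le: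
  assumes "1 \<le> n"
  shows "\<bar>Sigma_stat Z n x - s\<bar> \<le> \<bar>V_stat Z mu n x - s\<bar> + \<bar>sample_mean Z n x - mu\<bar>"
proof (rule abs_diff_le_of_power2_eq_add)
  have mean: "sample_mean Z n x = (\<Sum>j\<in>{1..n}. Z j x) / card {1..n}"
    by (simp add: sample_mean_def)
  have "(\<Sum>i=1..n. (Z i x - sample_mean Z n x)\<^sup>2)
      = (\<Sum>i=1..n. (Z i x - mu)\<^sup>2) - n * (sample_mean Z n x - mu)\<^sup>2"
    unfolding mean using assms by (subst sum_power2_diff_mean) auto
  then have eq: "(1 / n) * (\<Sum>i=1..n. (Z i x - sample_mean Z n x)\<^sup>2)
      = (1 / n) * (\<Sum>i=1..n. (Z i x - mu)\<^sup>2) - (sample_mean Z n x - mu)\<^sup>2"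
    using assms by (simp add: field_simps)
  have "(Sigma_stat Z n x)\<^sup>2 = (1 / n) * (\<Sum>i=1..n. (Z i x - mu)\<^sup>2) - (sample_mean Z n x - mu)\<^sup>2"
    unfolding Sigma_stat_def by (subst eq[symmetric]) (simp add: sum_nonneg)
  then show "(V_stat Z mu n x)\<^sup>2 = (Sigma_stat Z n x)\<^sup>2 + (sample_mean Z n x - mu)\<^sup>2"
    by (simp add: V_stat_def sum_nonneg)
qed (simp_all add: V_stat_def Sigma_stat_def sum_nonneg)

locale bounded_iid_sample = prob_space +
  fixes Z :: "nat \<Rightarrow> 'a \<Rightarrow> real" and n :: nat and mu sigma Delta :: real
  assumes n_ge_1: "1 \<le> n"
    and indep: "indep_vars (\<lambda>_. borel) Z {1..n}"
    and identically_distributed: "\<And>i. i \<in> {1..n} \<Longrightarrow> distr M borel (Z i) = distr M borel (Z 1)"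
    and mean: "expectation (Z 1) = mu"
    and variance: "expectation (\<lambda>x. (Z 1 x - mu)\<^sup>2) = sigma\<^sup>2"
    and sigma_pos: "0 < sigma"
    and bounded: "AE x in M. \<bar>Z 1 x - mu\<bar> \<le> Delta"
begin

sublocale Z: Hoeffding_ineq_iid M "{1..n}" Z "Z 1" "mu - Delta" "mu + Delta" mu
proof unfold_locales
  show "random_variable borel (Z 1)"
    using indep n_ge_1 by (simp add: indep_vars_def)
  show "AE x in M. Z 1 x \<in> {mu - Delta..mu + Delta}"
    using bounded by eventually_elim auto
  show "mu \<equiv> expectation (Z 1)"
    using mean by simp
  show "distr M borel (Z i) = distr M borel (Z 1)" if "i \<in> {1..n}" for i
    using that by (rule identically_distributed)
qed (simp_all add: indep[simplified])

sublocale W: iid_interval_bounded_random_variables M "{1..n}" "\<lambda>i x. (Z i x - mu)\<^sup>2"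
  "\<lambda>x. (Z 1 x - mu)\<^sup>2" 0 "Delta\<^sup>2"
proof unfold_locales
  show "indep_vars (\<lambda>_. borel) (\<lambda>i x. (Z i x - mu)\<^sup>2) {1..n}"
    by (rule indep_vars_compose2[OF indep]) auto
  show "distr M borel (\<lambda>x. (Z i x - mu)\<^sup>2) = distr M borel (\<lambda>x. (Z 1 x - mu)\<^sup>2)"
    if "i \<in> {1..n}" for i
  proof -
    have "distr M borel (\<lambda>x. (Z i x - mu)\<^sup>2) = distr (distr M borel (Z i)) borel (\<lambda>y. (y - mu)\<^sup>2)"
      using Z.random_variable[OF that] by (simp add: distr_distr comp_def)
    also have "\<dots> = distr (distr M borel (Z 1)) borel (\<lambda>y. (y - mu)\<^sup>2)"
      by (simp only: identically_distributed[OF that])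
    also have "\<dots> = distr M borel (\<lambda>x. (Z 1 x - mu)\<^sup>2)"
      using Z.rv_Y by (simp add: distr_distr comp_def)
    finally show ?thesis .
  qed
  show "AE x in M. (Z 1 x - mu)\<^sup>2 \<in> {0..Delta\<^sup>2}"
  proof (rule eventually_mono[OF bounded])
    fix x
    assume "\<bar>Z 1 x - mu\<bar> \<le> Delta"
    then have "\<bar>Z 1 x - mu\<bar>\<^sup>2 \<le> Delta\<^sup>2"
      by (rule power_mono) simp
    then show "(Z 1 x - mu)\<^sup>2 \<in> {0..Delta\<^sup>2}"
      by simp
  qed
  show "random_variable borel (\<lambda>x. (Z 1 x - mu)\<^sup>2)"
    by measurable
qed simp

lemma Delta_pos: "0 < Delta"
proof -
  have "AE x in M. 0 \<le> Delta"
    using bounded by (rule eventually_mono) auto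
  then have "0 \<le> Delta"
    by simp
  have W1: "interval_bounded_random_variable M (\<lambda>x. (Z 1 x - mu)\<^sup>2) 0 (Delta\<^sup>2)"
    using W.X.bounded_random_variable[of 1] n_ge_1 by simp
  have "sigma\<^sup>2 = expectation (\<lambda>x. (Z 1 x - mu)\<^sup>2)"
    by (rule variance[symmetric])
  also have "\<dots> \<le> expectation (\<lambda>_. Delta\<^sup>2)"
    by (rule integral_mono_AE[OF interval_bounded_random_variable.integrable[OF W1]])
       (use interval_bounded_random_variable.AE_in_interval[OF W1] in \<open>auto elim: eventually_mono\<close>)
  also have "\<dots> = Delta\<^sup>2"
    by (simp add: prob_space)
  finally have "sigma \<le> Delta"
    using \<open>0 \<le> Delta\<close> by (rule power2_le_imp_le)
  with sigma_pos show ?thesis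
    by linarith
qed

lemma sample_mean_measurable [measurable]: "sample_mean Z n \<in> borel_measurable M"
  unfolding sample_mean_def[abs_def] by measurable

lemma V_stat_measurable [measurable]: "V_stat Z mu n \<in> borel_measurable M"
  unfolding V_stat_def[abs_def] by measurable

lemma exp_deviation_exponent_le:
  fixes z t :: real
  assumes "0 \<le> z" "z * Delta / sqrt n \<le> t"
  shows "exp (- real n * t\<^sup>2 / (2 * Delta\<^sup>2)) \<le> exp (- z\<^sup>2 / 2)"
proof -
  have "(z * Delta / sqrt n)\<^sup>2 \<le> t\<^sup>2"
    by (rule power_mono) (use assms Delta_pos in simp_all)
  then have "z\<^sup>2 / 2 \<le> real n * t\<^sup>2 / (2 * Delta\<^sup>2)"
    using Delta_pos n_ge_1 by (simp add: power_divide power_mult_distrib field_simps)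
  then show ?thesis
    by simp
qed

lemma prob_V_stat_deviation_gt:
  fixes u :: real
  assumes "0 < u"
  shows "prob {x \<in> space M. u < \<bar>V_stat Z mu n x - sigma\<bar>} \<le> 2 * exp (- real n * u\<^sup>2 / (2 * Delta\<^sup>2))"
proof -
  have "prob {x \<in> space M. u < \<bar>sqrt ((\<Sum>i\<in>{1..n}. (Z i x - mu)\<^sup>2) / card {1..n}) - sigma\<bar>}
      \<le> 2 * exp (- real (card {1..n}) * u\<^sup>2 / (2 * Delta\<^sup>2))"
  proof (rule prob_sqrt_mean_deviation_gt)
    show "expectation (\<lambda>x. (Z i x - mu)\<^sup>2) = sigma\<^sup>2" if "i \<in> {1..n}" for i
      using W.expectation_X[OF that] variance by simp
    show "AE x in M. (Z i x - mu)\<^sup>2 \<in> {0..Delta\<^sup>2}" if "i \<in> {1..n}" for i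
      using W.X.AE_in_interval[OF that] by simp
  qed (use W.indep Delta_pos sigma_pos n_ge_1 assms in simp_all)
  then show ?thesis
    by (simp add: V_stat_def)
qed

lemma prob_sample_mean_deviation_ge:
  fixes u :: real
  assumes "0 \<le> u"
  shows "prob {x \<in> space M. u \<le> \<bar>sample_mean Z n x - mu\<bar>} \<le> 2 * exp (- real n * u\<^sup>2 / (2 * Delta\<^sup>2))"
proof -
  have "prob {x \<in> space M. u \<le> \<bar>(\<Sum>i\<in>{1..n}. Z i x) / card {1..n} - mu\<bar>}
      \<le> 2 * exp (-2 * card {1..n} * u\<^sup>2 / ((mu + Delta) - (mu - Delta))\<^sup>2)"
    using Z.Hoeffding_ineq_abs_ge'[OF assms] Delta_pos n_ge_1 by simp
  then show ?thesis
    using Delta_pos by (simp add: sample_mean_def power2_eq_square field_simps)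
qed

lemma prob_Sigma_stat_deviation_gt:
  fixes u :: real
  assumes "0 < u"
  shows "prob {x \<in> space M. 2 * u < \<bar>Sigma_stat Z n x - sigma\<bar>} \<le> 4 * exp (- real n * u\<^sup>2 / (2 * Delta\<^sup>2))"
proof -
  define V_dev where "V_dev = {x \<in> space M. u < \<bar>V_stat Z mu n x - sigma\<bar>}"
  define mean_dev where "mean_dev = {x \<in> space M. u \<le> \<bar>sample_mean Z n x - mu\<bar>}"
  have sets: "V_dev \<in> sets M" "mean_dev \<in> sets M"
    unfolding V_dev_def mean_dev_def by measurable
  have "{x \<in> space M. 2 * u < \<bar>Sigma_stat Z n x - sigma\<bar>} \<subseteq> V_dev \<union> mean_dev"
  proof
    fix x
    assume "x \<in> {x \<in> space M. 2 * u < \<bar>Sigma_stat Z n x - sigma\<bar>}"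
    moreover have "\<bar>Sigma_stat Z n x - sigma\<bar> \<le> \<bar>V_stat Z mu n x - sigma\<bar> + \<bar>sample_mean Z n x - mu\<bar>"
      by (rule Sigma_stat_deviation_le[OF n_ge_1])
    ultimately show "x \<in> V_dev \<union> mean_dev"
      unfolding V_dev_def mean_dev_def by auto
  qed
  then have "prob {x \<in> space M. 2 * u < \<bar>Sigma_stat Z n x - sigma\<bar>} \<le> prob (V_dev \<union> mean_dev)"
    by (rule finite_measure_mono) (use sets in auto)
  also have "\<dots> \<le> prob V_dev + prob mean_dev"
    by (rule measure_Un_le) (use sets in auto)
  finally show ?thesis
    using prob_V_stat_deviation_gt[OF assms] prob_sample_mean_deviation_ge[of u] assms
    unfolding V_dev_def mean_dev_def by linarith
qed

end

theorem theoremA3: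
  fixes M :: "'a measure" and Z :: "nat \<Rightarrow> 'a \<Rightarrow> real"
    and n :: nat and mu sigma Delta z :: real
  assumes "prob_space M"
    and "n \<ge> 1"
    and "\<And>i. i \<in> {1..n} \<Longrightarrow> Z i \<in> borel_measurable M"
    and "prob_space.indep_vars M (\<lambda>_. borel) Z {1..n}"
    and "\<And>i. i \<in> {1..n} \<Longrightarrow> distr M borel (Z i) = distr M borel (Z 1)"
    and "(LINT x|M. Z 1 x) = mu"
    and "(LINT x|M. (Z 1 x - mu)\<^sup>2) = sigma\<^sup>2"
    and "sigma > 0"
    and "AE x in M. \<bar>Z 1 x - mu\<bar> \<le> Delta"
    and "z > 0"
  shows "measure M {x \<in> space M. \<bar>V_stat Z mu n x - sigma\<bar>
             > z * Delta / sqrt (real n) + z\<^sup>2 * Delta\<^sup>2 / (12 * real n * sigma)}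
           \<le> 2 * exp (- z\<^sup>2 / 2)
       \<and> measure M {x \<in> space M. \<bar>Sigma_stat Z n x - sigma\<bar>
             > 2 * z * Delta / sqrt (real n) + 2 * z\<^sup>2 * Delta\<^sup>2 / (12 * real n * sigma)}
           \<le> 4 * exp (- z\<^sup>2 / 2)"
proof -
  interpret bounded_iid_sample M Z n mu sigma Delta
    by (intro bounded_iid_sample.intro bounded_iid_sample_axioms.intro) (fact assms)+
  define t where "t = z * Delta / sqrt (real n) + z\<^sup>2 * Delta\<^sup>2 / (12 * real n * sigma)"
  have "z * Delta / sqrt n \<le> t" "0 < t"
    using \<open>z > 0\<close> Delta_pos sigma_pos n_ge_1 by (simp_all add: t_def add_pos_nonneg)
  then have exp_bound: "exp (- real n * t\<^sup>2 / (2 * Delta\<^sup>2)) \<le> exp (- z\<^sup>2 / 2)"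
    using \<open>z > 0\<close> by (intro exp_deviation_exponent_le) simp_all
  have V: "prob {x \<in> space M. t < \<bar>V_stat Z mu n x - sigma\<bar>} \<le> 2 * exp (- z\<^sup>2 / 2)"
    using prob_V_stat_deviation_gt[OF \<open>0 < t\<close>] exp_bound by linarith
  have Sigma: "prob {x \<in> space M. 2 * t < \<bar>Sigma_stat Z n x - sigma\<bar>} \<le> 4 * exp (- z\<^sup>2 / 2)"
    using prob_Sigma_stat_deviation_gt[OF \<open>0 < t\<close>] exp_bound by linarith
  have two_t: "2 * t = 2 * z * Delta / sqrt (real n) + 2 * z\<^sup>2 * Delta\<^sup>2 / (12 * real n * sigma)"
    by (simp add: t_def algebra_simps)
  show ?thesis
    using V Sigma unfolding two_t unfolding t_def by (rule conjI)
qed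

end
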